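(* Let $\nu$, $f$, $\Phi$, $\mathcal{I}$, $\zeta_n$ and $\zeta$ be as in the context. Then for each $a\in(0,1]$ and each $p\in\mathcal{I}\cap(0,1]$, $$\mathbf{E}\sup_{x\in[a,1]}|\zeta(x)-\zeta_n(x)|^p\to0\quad\text{as } n\to\infty.$$
   Context: Let $\mathcal{G}$ be the space of Lipschitz functions $f:\mathbb{R}\to\mathbb{R}$ with the norm $|f(0)|+L_f$, where $L_f=\sup_{x\neq y}|f(y)-f(x)|/|x-y|$, and its Borel $\sigma$-algebra. Let $\nu$ be a probability measure on $\mathcal{G}$, $f$ a random element with distribution $\nu$, and assume $\mathbf{E}L_f<\infty$, $\mathbf{E}\log L_f<0$ and $\mathbf{E}|f(z_0)-z_0|<\infty$ for a fixed $z_0\in\mathbb{R}$. Let $\Phi(p)=\mathbf{E}L_f^p$ and $\mathcal{I}=\{p>0:\Phi(p)<1\}$. Let $(f_i)_{i\ge1}$ be i.i.d. with distribution $\nu$ and, independently, $(U_i)_{i\ge1}$ i.i.d. uniform on $[0,1]$. For $x\in(0,1]$ let $f_{i,x}=f_i$ if $U_i\le x$ and $f_{i,x}=\mathrm{Id}$ (identity) otherwise, $\zeta_n(x)=f_{1,x}\circ\cdots\circ f_{n,x}(z_0)$, and $\zeta(x)=\lim_{n\to\infty}\zeta_n(x)$ (the a.s. limit, which exists). *)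

theory Defs
  imports "HOL-Probability.Probability"
begin

definition LipG :: "(real \<Rightarrow> real) set" where
  "LipG = {f. \<exists>C. C-lipschitz_on UNIV f}"

definition Lip :: "(real \<Rightarrow> real) \<Rightarrow> real" where
  "Lip f = (SUP xy \<in> {(x, y). x \<noteq> y}. \<bar>f (snd xy) - f (fst xy)\<bar> / \<bar>fst xy - snd xy\<bar>)"

definition lip_norm :: "(real \<Rightarrow> real) \<Rightarrow> real" where
  "lip_norm f = \<bar>f 0\<bar> + Lip f"

definition lip_open :: "(real \<Rightarrow> real) set \<Rightarrow> bool" where
  "lip_open U \<longleftrightarrow> U \<subseteq> LipG \<and>
     (\<forall>f\<in>U. \<exists>e>0. \<forall>g\<in>LipG. lip_norm (\<lambda>x. g x - f x) < e \<longrightarrow> g \<in> U)"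

definition LipM :: "(real \<Rightarrow> real) measure" where
  "LipM = sigma LipG {U. lip_open U}"

primrec iter_comp :: "(nat \<Rightarrow> real \<Rightarrow> real) \<Rightarrow> nat \<Rightarrow> real \<Rightarrow> real" where
  "iter_comp g 0 = id"
| "iter_comp g (Suc n) = iter_comp g n \<circ> g n"

text \<open>f_{i,x}: f_i if U_i <= x, identity otherwise (indices shifted to start at 0).\<close>
definition f_sel :: "(nat \<Rightarrow> 'a \<Rightarrow> real \<Rightarrow> real) \<Rightarrow> (nat \<Rightarrow> 'a \<Rightarrow> real) \<Rightarrow> real \<Rightarrow> 'a \<Rightarrow> nat \<Rightarrow> real \<Rightarrow> real" where
  "f_sel F U x \<omega> i = (if U i \<omega> \<le> x then F i \<omega> else id)"

definition zeta_n :: "(nat \<Rightarrow> 'a \<Rightarrow> real \<Rightarrow> real) \<Rightarrow> (nat \<Rightarrow> 'a \<Rightarrow> real) \<Rightarrow> real \<Rightarrow> nat \<Rightarrow> real \<Rightarrow> 'a \<Rightarrow> real" where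
  "zeta_n F U z0 n x \<omega> = iter_comp (f_sel F U x \<omega>) n z0"

text \<open>zeta(x) = limit of zeta_n(x) (exists almost surely).\<close>
definition zeta :: "(nat \<Rightarrow> 'a \<Rightarrow> real \<Rightarrow> real) \<Rightarrow> (nat \<Rightarrow> 'a \<Rightarrow> real) \<Rightarrow> real \<Rightarrow> real \<Rightarrow> 'a \<Rightarrow> real" where
  "zeta F U z0 x \<omega> = lim (\<lambda>n. zeta_n F U z0 n x \<omega>)"

text \<open>Outer (upper) expectation; agrees with the usual expectation for measurable functions.\<close>
definition outer_nn_integral :: "'a measure \<Rightarrow> ('a \<Rightarrow> ennreal) \<Rightarrow> ennreal" where
  "outer_nn_integral M g =
     (INF h \<in> {h \<in> borel_measurable M. \<forall>\<omega>\<in>space M. g \<omega> \<le> h \<omega>}. nn_integral M h)"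

text \<open>Negative part of log L_f, with log 0 = -infinity.\<close>
definition neg_log_part :: "real \<Rightarrow> ennreal" where
  "neg_log_part L = (if L = 0 then \<infinity> else ennreal (max 0 (- ln L)))"

definition pos_log_part :: "real \<Rightarrow> ennreal" where
  "pos_log_part L = (if L = 0 then 0 else ennreal (max 0 (ln L)))"

end

theory Submission
  imports Defs
begin

text \<open>For x \<ge> a the map f_{i,x} is f_i with probability x, so the p-th power of its Lipschitz
  constant has mean 1 - x + x Phi(p) \<le> 1 - a (1 - Phi(p)) < 1. To treat all x \<in> [a,1] at once,
  cover [a,1] by finitely many windows [c, c + \<delta>]: for x in a window these p-th powers are all
  dominated by 1{U_i > c} + L_{f_i}^p 1{U_i \<le> c + \<delta>}, whose mean r is still < 1 when \<delta> is
  small. Hence |\<zeta>_{k+1}(x) - \<zeta>_k(x)|^p \<le> B_k uniformly in x, where by independence E B_k = O(r^k).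
  Subadditivity of t \<mapsto> t^p then bounds sup_x |\<zeta>(x) - \<zeta>_n(x)|^p by the tail sum of the B_k,
  whose mean is O(r^n).\<close>

section \<open>The space G of Lipschitz functions\<close>

lemma LipG_iff: "f \<in> LipG \<longleftrightarrow> (\<exists>C. \<forall>x y. \<bar>f y - f x\<bar> \<le> C * \<bar>x - y\<bar>)"
proof
  assume "f \<in> LipG"
  then obtain C where "C-lipschitz_on UNIV f" by (auto simp: LipG_def)
  then show "\<exists>C. \<forall>x y. \<bar>f y - f x\<bar> \<le> C * \<bar>x - y\<bar>"
    by (auto simp: lipschitz_on_def dist_real_def abs_minus_commute)
next
  assume "\<exists>C. \<forall>x y. \<bar>f y - f x\<bar> \<le> C * \<bar>x - y\<bar>"
  then obtain C where C: "\<And>x y. \<bar>f y - f x\<bar> \<le> C * \<bar>x - y\<bar>" by blast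
  have "0 \<le> C" using C[of 0 1] by simp
  with C have "C-lipschitz_on UNIV f"
    by (auto simp: lipschitz_on_def dist_real_def abs_minus_commute)
  then show "f \<in> LipG" by (auto simp: LipG_def)
qed

lemma abs_diff_le_Lip:
  assumes "f \<in> LipG"
  shows "\<bar>f y - f x\<bar> \<le> Lip f * \<bar>x - y\<bar>"
proof (cases "x = y")
  case False
  obtain C where C: "\<And>x y. \<bar>f y - f x\<bar> \<le> C * \<bar>x - y\<bar>" using assms LipG_iff by blast
  have "bdd_above ((\<lambda>xy. \<bar>f (snd xy) - f (fst xy)\<bar> / \<bar>fst xy - snd xy\<bar>) ` {(x, y). x \<noteq> y})"
    using C by (intro bdd_aboveI2[of _ _ C]) (auto simp: divide_le_eq)
  then have "\<bar>f (snd (x, y)) - f (fst (x, y))\<bar> / \<bar>fst (x, y) - snd (x, y)\<bar> \<le> Lip f"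
    unfolding Lip_def using False by (intro cSUP_upper) auto
  then show ?thesis using False by (simp add: divide_le_eq)
qed simp

lemma Lip_le:
  assumes "\<And>x y. x \<noteq> y \<Longrightarrow> \<bar>f y - f x\<bar> \<le> C * \<bar>x - y\<bar>"
  shows "Lip f \<le> C"
  unfolding Lip_def
proof (rule cSUP_least)
  show "{(x, y). x \<noteq> (y::real)} \<noteq> {}" by (auto intro: exI[of _ 0] exI[of _ 1])
next
  fix xy :: "real \<times> real" assume "xy \<in> {(x, y). x \<noteq> y}"
  then show "\<bar>f (snd xy) - f (fst xy)\<bar> / \<bar>fst xy - snd xy\<bar> \<le> C"
    using assms[of "fst xy" "snd xy"] by (auto simp: divide_le_eq)
qed

lemma Lip_nonneg: "f \<in> LipG \<Longrightarrow> 0 \<le> Lip f"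
  using abs_diff_le_Lip[of f 1 0] by simp

lemma LipG_diff:
  assumes "f \<in> LipG" "g \<in> LipG"
  shows "(\<lambda>x. g x - f x) \<in> LipG"
proof -
  have "\<bar>(g y - f y) - (g x - f x)\<bar> \<le> (Lip g + Lip f) * \<bar>x - y\<bar>" for x y
    using abs_diff_le_Lip[OF assms(1), of y x] abs_diff_le_Lip[OF assms(2), of y x]
    by (simp add: algebra_simps abs_le_iff)
  then show ?thesis unfolding LipG_iff by blast
qed

lemma Lip_le_Lip_add_Lip_diff:
  assumes "f \<in> LipG" "g \<in> LipG"
  shows "Lip g \<le> Lip f + Lip (\<lambda>x. g x - f x)"
proof (rule Lip_le)
  fix x y :: real
  have "\<bar>g y - g x\<bar> \<le> \<bar>f y - f x\<bar> + \<bar>(g y - f y) - (g x - f x)\<bar>" by linarith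
  also have "\<dots> \<le> Lip f * \<bar>x - y\<bar> + Lip (\<lambda>x. g x - f x) * \<bar>x - y\<bar>"
    using assms LipG_diff by (intro add_mono abs_diff_le_Lip) auto
  finally show "\<bar>g y - g x\<bar> \<le> (Lip f + Lip (\<lambda>x. g x - f x)) * \<bar>x - y\<bar>"
    by (simp add: algebra_simps)
qed

lemma Lip_minus_commute: "Lip (\<lambda>x. f x - g x) = Lip (\<lambda>x. g x - f x)"
proof -
  have "\<bar>f a - g a - (f b - g b)\<bar> = \<bar>g a - f a - (g b - f b)\<bar>" for a b by linarith
  then show ?thesis unfolding Lip_def by simp
qed

lemma abs_Lip_diff_le:
  assumes "f \<in> LipG" "g \<in> LipG"
  shows "\<bar>Lip g - Lip f\<bar> \<le> Lip (\<lambda>x. g x - f x)"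
  using Lip_le_Lip_add_Lip_diff[OF assms] Lip_le_Lip_add_Lip_diff[OF assms(2,1)]
  using Lip_minus_commute[of f g] by linarith

lemma space_LipM: "space LipM = LipG"
  unfolding LipM_def by (rule space_measure_of) (auto simp: lip_open_def)

lemma borel_measurable_LipM_lipschitz:
  assumes "\<And>f g. f \<in> LipG \<Longrightarrow> g \<in> LipG \<Longrightarrow> \<bar>\<Psi> g - \<Psi> f\<bar> \<le> K * lip_norm (\<lambda>x. g x - f x)"
    and "0 < K"
  shows "\<Psi> \<in> borel_measurable LipM"
proof (rule borel_measurableI)
  fix S :: "real set" assume "open S"
  have "lip_open (\<Psi> -` S \<inter> LipG)"
    unfolding lip_open_def
  proof safe
    fix f assume f: "f \<in> LipG" "\<Psi> f \<in> S"
    then obtain e where e: "e > 0" "ball (\<Psi> f) e \<subseteq> S"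
      using \<open>open S\<close> open_contains_ball by blast
    show "\<exists>e>0. \<forall>g\<in>LipG. lip_norm (\<lambda>x. g x - f x) < e \<longrightarrow> g \<in> \<Psi> -` S \<inter> LipG"
    proof (intro exI[of _ "e / K"] conjI ballI impI)
      fix g assume g: "g \<in> LipG" "lip_norm (\<lambda>x. g x - f x) < e / K"
      then have "\<bar>\<Psi> g - \<Psi> f\<bar> < e"
        using assms(1)[OF f(1) g(1)] \<open>0 < K\<close> by (simp add: less_divide_eq mult.commute)
      then show "g \<in> \<Psi> -` S \<inter> LipG"
        using e g by (auto simp: dist_real_def abs_minus_commute)
    qed (use e \<open>0 < K\<close> in simp)
  qed
  then have "\<Psi> -` S \<inter> LipG \<in> sets LipM"
    unfolding LipM_def by (subst sets_measure_of) (auto simp: lip_open_def)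
  then show "\<Psi> -` S \<inter> space LipM \<in> sets LipM"
    by (simp add: space_LipM)
qed

lemma borel_measurable_Lip [measurable]: "Lip \<in> borel_measurable LipM"
proof (rule borel_measurable_LipM_lipschitz[of _ 1])
  fix f g assume "f \<in> LipG" "g \<in> LipG"
  then show "\<bar>Lip g - Lip f\<bar> \<le> 1 * lip_norm (\<lambda>x. g x - f x)"
    using abs_Lip_diff_le[of f g] by (simp add: lip_norm_def)
qed simp

lemma borel_measurable_LipM_eval [measurable]: "(\<lambda>g. g z) \<in> borel_measurable LipM"
proof (rule borel_measurable_LipM_lipschitz[of _ "1 + \<bar>z\<bar>"])
  fix f g assume "f \<in> LipG" "g \<in> LipG"
  then have h: "(\<lambda>x. g x - f x) \<in> LipG" by (rule LipG_diff)
  have "\<bar>g z - f z\<bar> \<le> \<bar>g 0 - f 0\<bar> + Lip (\<lambda>x. g x - f x) * \<bar>z\<bar>"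
    using abs_diff_le_Lip[OF h, of z 0] by simp
  also have "\<dots> \<le> (1 + \<bar>z\<bar>) * lip_norm (\<lambda>x. g x - f x)"
    using Lip_nonneg[OF h] by (simp add: lip_norm_def algebra_simps)
  finally show "\<bar>g z - f z\<bar> \<le> (1 + \<bar>z\<bar>) * lip_norm (\<lambda>x. g x - f x)" .
qed simp

section \<open>Subadditivity of p-th powers and tails of series\<close>

lemma powr_ge_self:
  fixes t p :: real
  assumes "0 \<le> t" "t \<le> 1" "p \<le> 1"
  shows "t \<le> t powr p"
  using powr_mono'[of p 1 t] assms by (cases "t = 0") auto

lemma powr_add_le:
  fixes u v p :: real
  assumes u: "0 \<le> u" and v: "0 \<le> v" and p: "0 < p" "p \<le> 1"
  shows "(u + v) powr p \<le> u powr p + v powr p"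
proof (cases "u + v = 0")
  case True
  then show ?thesis using u v by simp
next
  case False
  define s where "s = u + v"
  have s: "0 < s" using False u v by (simp add: s_def)
  have "u / s \<le> u powr p / s powr p"
    using powr_ge_self[of "u / s" p] u v s p by (simp add: powr_divide divide_le_eq s_def)
  moreover have "v / s \<le> v powr p / s powr p"
    using powr_ge_self[of "v / s" p] u v s p by (simp add: powr_divide divide_le_eq s_def)
  moreover have "u / s + v / s = 1" using s by (simp add: s_def add_divide_distrib[symmetric])
  ultimately have "1 \<le> (u powr p + v powr p) / s powr p" by (simp add: add_divide_distrib)
  then have "s powr p \<le> u powr p + v powr p" using s by (simp add: le_divide_eq)
  then show ?thesis by (simp add: s_def)
qed

lemma powr_sum_le:
  fixes y :: "'i \<Rightarrow> real" and p :: real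
  assumes "finite A" "\<And>i. 0 \<le> y i" "0 < p" "p \<le> 1"
  shows "(\<Sum>i\<in>A. y i) powr p \<le> (\<Sum>i\<in>A. y i powr p)"
  using assms(1)
proof (induct A rule: finite_induct)
  case (insert x A)
  have "(\<Sum>i\<in>insert x A. y i) powr p \<le> y x powr p + (\<Sum>i\<in>A. y i) powr p"
    using insert assms by (simp add: powr_add_le sum_nonneg)
  also have "\<dots> \<le> y x powr p + (\<Sum>i\<in>A. y i powr p)" using insert by simp
  finally show ?case using insert by simp
qed simp

lemma powr_le_one_add:
  fixes t p :: real
  assumes "0 \<le> t" "0 \<le> p" "p \<le> 1"
  shows "t powr p \<le> 1 + t"
proof (cases "t \<le> 1")
  case True
  then have "t powr p \<le> 1 powr p" using assms by (intro powr_mono2) auto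
  then show ?thesis using assms by simp
next
  case False
  then have "t powr p \<le> t powr 1" using assms by (intro powr_mono) auto
  then show ?thesis using assms by simp
qed

lemma summable_abs_if_summable_powr_bound:
  fixes d b :: "nat \<Rightarrow> real"
  assumes "0 < p" "p \<le> 1" "summable b" "\<And>k. \<bar>d k\<bar> powr p \<le> b k"
  shows "summable (\<lambda>k. \<bar>d k\<bar>)"
proof (rule summable_comparison_test_ev[OF _ assms(3)])
  have "eventually (\<lambda>k. b k < 1) sequentially"
    using summable_LIMSEQ_zero[OF assms(3)] by (rule order_tendstoD) simp
  then show "eventually (\<lambda>k. norm \<bar>d k\<bar> \<le> b k) sequentially"
  proof eventually_elim
    case (elim k)
    have "\<bar>d k\<bar> < 1"
    proof (rule ccontr)
      assume "\<not> \<bar>d k\<bar> < 1"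
      then have "1 \<le> \<bar>d k\<bar> powr p" using assms by (intro ge_one_powr_ge_zero) auto
      then show False using assms(4)[of k] elim by linarith
    qed
    then have "\<bar>d k\<bar> \<le> \<bar>d k\<bar> powr p" using assms by (intro powr_ge_self) auto
    then show ?case using assms(4)[of k] by simp
  qed
qed

lemma abs_lim_diff_powr_le_suminf:
  fixes s b :: "nat \<Rightarrow> real"
  assumes p: "0 < p" "p \<le> 1" and b: "summable b"
    and incr: "\<And>k. \<bar>s (Suc k) - s k\<bar> powr p \<le> b k"
  shows "\<bar>lim s - s n\<bar> powr p \<le> (\<Sum>k. b (k + n))"
proof -
  define d where "d k = s (Suc k) - s k" for k
  have b0: "0 \<le> b k" for k by (rule order_trans[OF powr_ge_zero incr])
  have tail_summable: "summable (\<lambda>k. b (k + n))"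
    using summable_ignore_initial_segment[OF b] by simp
  have s_eq: "s m = s 0 + (\<Sum>k<m. d k)" for m
    unfolding d_def by (simp add: sum_lessThan_telescope)
  have "summable d"
    using summable_abs_if_summable_powr_bound[OF p b] incr summable_rabs_cancel
    by (auto simp: d_def)
  have conv: "s \<longlonglongrightarrow> s 0 + suminf d"
    using tendsto_add[OF tendsto_const[of "s 0"] summable_LIMSEQ[OF \<open>summable d\<close>]]
    by (simp add: s_eq[symmetric])
  have "\<bar>s m - s n\<bar> powr p \<le> (\<Sum>k. b (k + n))" if "n \<le> m" for m
  proof -
    have "s m - s n = (\<Sum>k\<in>{n..<m}. d k)"
      using that sum.atLeastLessThan_concat[of 0 n m d]
      by (simp add: s_eq[of m] s_eq[of n] atLeast0LessThan)
    then have "\<bar>s m - s n\<bar> powr p \<le> (\<Sum>k\<in>{n..<m}. \<bar>d k\<bar>) powr p"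
      using p by (auto intro!: powr_mono2 sum_abs)
    also have "\<dots> \<le> (\<Sum>k\<in>{n..<m}. b k)"
      using p incr by (intro order_trans[OF powr_sum_le sum_mono]) (auto simp: d_def)
    also have "\<dots> = (\<Sum>k<m - n. b (k + n))"
      using sum.shift_bounds_nat_ivl[of b 0 n "m - n"] that by (simp add: atLeast0LessThan)
    also have "\<dots> \<le> (\<Sum>k. b (k + n))"
      using b0 tail_summable by (intro sum_le_suminf) auto
    finally show ?thesis .
  qed
  moreover have "(\<lambda>m. \<bar>s m - s n\<bar> powr p) \<longlonglongrightarrow> \<bar>lim s - s n\<bar> powr p"
    using conv p limI[OF conv] by (intro tendsto_powr' tendsto_rabs tendsto_diff) auto
  ultimately show ?thesis
    by (intro tendsto_upperbound) (auto simp: eventually_at_top_linorder intro!: exI[of _ n])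
qed

lemma ennreal_abs_lim_diff_powr_le_suminf:
  fixes s :: "nat \<Rightarrow> real" and B :: "nat \<Rightarrow> ennreal"
  assumes p: "0 < p" "p \<le> 1" and fin: "(\<Sum>k. B k) \<noteq> \<infinity>"
    and incr: "\<And>k. ennreal (\<bar>s (Suc k) - s k\<bar> powr p) \<le> B k"
  shows "ennreal (\<bar>lim s - s n\<bar> powr p) \<le> (\<Sum>k. B (k + n))"
proof -
  have B_le: "B k \<le> (\<Sum>k. B k)" for k
    using sum_le_suminf[of B "{k}"] by auto
  obtain b where B_eq: "\<And>k. B k = ennreal (b k)" and b0: "\<And>k. 0 \<le> b k"
  proof (rule that[of "\<lambda>k. enn2real (B k)"])
    show "B k = ennreal (enn2real (B k))" for k
      using B_le[of k] fin by (intro ennreal_enn2real[symmetric]) (auto simp: top_unique less_top)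
  qed simp
  have "summable b"
    using fin b0 by (intro summable_suminf_not_top) (simp_all add: B_eq)
  then have "\<bar>lim s - s n\<bar> powr p \<le> (\<Sum>k. b (k + n))"
    using incr b0 by (intro abs_lim_diff_powr_le_suminf[OF p]) (simp_all add: B_eq ennreal_le_iff)
  also have "ennreal (\<Sum>k. b (k + n)) = (\<Sum>k. B (k + n))"
    using summable_ignore_initial_segment[OF \<open>summable b\<close>, of n]
    by (simp add: B_eq b0 suminf_ennreal2)
  finally show ?thesis by (simp add: ennreal_leI)
qed

section \<open>Lipschitz bounds for the iteration on a window\<close>

lemma iter_comp_lipschitz:
  assumes "\<And>i y z. \<bar>g i y - g i z\<bar> \<le> l i * \<bar>y - z\<bar>" "\<And>i. 0 \<le> l i"
  shows "\<bar>iter_comp g k y - iter_comp g k z\<bar> \<le> (\<Prod>i<k. l i) * \<bar>y - z\<bar>"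
proof (induct k arbitrary: y z)
  case (Suc k)
  have "\<bar>iter_comp g (Suc k) y - iter_comp g (Suc k) z\<bar> \<le> (\<Prod>i<k. l i) * \<bar>g k y - g k z\<bar>"
    using Suc by simp
  also have "\<dots> \<le> (\<Prod>i<k. l i) * (l k * \<bar>y - z\<bar>)"
    using assms by (intro mult_left_mono prod_nonneg) auto
  finally show ?case by (simp add: mult.assoc)
qed simp

lemma zeta_n_Suc_diff_le:
  assumes "\<And>i. F i \<omega> \<in> LipG"
  shows "\<bar>zeta_n F U z0 (Suc k) x \<omega> - zeta_n F U z0 k x \<omega>\<bar>
           \<le> (\<Prod>i<k. if U i \<omega> \<le> x then Lip (F i \<omega>) else 1) * \<bar>F k \<omega> z0 - z0\<bar>"
proof -
  let ?g = "f_sel F U x \<omega>" and ?l = "\<lambda>i. if U i \<omega> \<le> x then Lip (F i \<omega>) else 1"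
  have "\<bar>iter_comp ?g k (?g k z0) - iter_comp ?g k z0\<bar> \<le> (\<Prod>i<k. ?l i) * \<bar>?g k z0 - z0\<bar>"
    using abs_diff_le_Lip[OF assms] Lip_nonneg[OF assms]
    by (intro iter_comp_lipschitz) (auto simp: f_sel_def abs_minus_commute)
  also have "\<dots> \<le> (\<Prod>i<k. ?l i) * \<bar>F k \<omega> z0 - z0\<bar>"
    using Lip_nonneg[OF assms] by (intro mult_left_mono prod_nonneg) (auto simp: f_sel_def)
  finally show ?thesis by (simp add: zeta_n_def)
qed

definition lip_window :: "real \<Rightarrow> real \<Rightarrow> real \<Rightarrow> (real \<Rightarrow> real) \<times> real \<Rightarrow> ennreal" where
  "lip_window p c c' gu =
     indicator {c<..} (snd gu) + ennreal (Lip (fst gu) powr p) * indicator {..c'} (snd gu)"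

lemma borel_measurable_lip_window [measurable]:
  "lip_window p c c' \<in> borel_measurable (LipM \<Otimes>\<^sub>M borel)"
  unfolding lip_window_def by measurable

lemma selected_Lip_powr_le_lip_window:
  assumes "c \<le> x" "x \<le> c'"
  shows "ennreal ((if u \<le> x then Lip g else 1) powr p) \<le> lip_window p c c' (g, u)"
  using assms by (cases "u \<le> c"; cases "u \<le> c'") (auto simp: lip_window_def indicator_def)

lemma zeta_n_Suc_diff_powr_le_lip_window:
  assumes "\<And>i. F i \<omega> \<in> LipG" "0 < p" "p \<le> 1" "c \<le> x" "x \<le> c'"
  shows "ennreal (\<bar>zeta_n F U z0 (Suc k) x \<omega> - zeta_n F U z0 k x \<omega>\<bar> powr p)
           \<le> (\<Prod>i<k. lip_window p c c' (F i \<omega>, U i \<omega>)) * (1 + ennreal \<bar>F k \<omega> z0 - z0\<bar>)"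
proof -
  let ?l = "\<lambda>i. if U i \<omega> \<le> x then Lip (F i \<omega>) else 1" and ?D = "\<bar>F k \<omega> z0 - z0\<bar>"
  have l0: "0 \<le> ?l i" for i using Lip_nonneg[OF assms(1)] by simp
  have "\<bar>zeta_n F U z0 (Suc k) x \<omega> - zeta_n F U z0 k x \<omega>\<bar> powr p \<le> ((\<Prod>i<k. ?l i) * ?D) powr p"
    using zeta_n_Suc_diff_le[where F=F and \<omega>=\<omega>, OF assms(1)] assms(2) by (intro powr_mono2) auto
  also have "\<dots> = (\<Prod>i<k. ?l i powr p) * ?D powr p"
    using l0 by (simp add: powr_mult prod_nonneg prod_powr_distrib)
  also have "\<dots> \<le> (\<Prod>i<k. ?l i powr p) * (1 + ?D)"
    using assms by (intro mult_left_mono powr_le_one_add prod_nonneg) auto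
  finally have "ennreal (\<bar>zeta_n F U z0 (Suc k) x \<omega> - zeta_n F U z0 k x \<omega>\<bar> powr p)
      \<le> ennreal ((\<Prod>i<k. ?l i powr p) * (1 + ?D))"
    by (rule ennreal_leI)
  also have "\<dots> = (\<Prod>i<k. ennreal (?l i powr p)) * (1 + ennreal ?D)"
    by (simp add: ennreal_mult prod_nonneg prod_ennreal ennreal_plus)
  also have "\<dots> \<le> (\<Prod>i<k. lip_window p c c' (F i \<omega>, U i \<omega>)) * (1 + ennreal ?D)"
    using assms(4,5) by (intro mult_right_mono prod_mono_ennreal selected_Lip_powr_le_lip_window) auto
  finally show ?thesis .
qed

lemma nn_integral_lip_window_le:
  assumes \<nu>: "prob_space \<nu>" "sets \<nu> = sets LipM" and c: "0 \<le> c" "c \<le> 1" "0 \<le> c'"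
  shows "(\<integral>\<^sup>+gu. lip_window p c c' gu \<partial>(\<nu> \<Otimes>\<^sub>M uniform_measure lborel {0..1}))
           \<le> ennreal (1 - c) + (\<integral>\<^sup>+g. ennreal (Lip g powr p) \<partial>\<nu>) * ennreal c'"
proof -
  define Unif where "Unif = uniform_measure lborel {0..1::real}"
  interpret Unif: prob_space Unif unfolding Unif_def by (rule prob_space_uniform_measure) auto
  interpret \<nu>: prob_space \<nu> by (rule \<nu>(1))
  have [measurable_cong]: "sets (\<nu> \<Otimes>\<^sub>M Unif) = sets (LipM \<Otimes>\<^sub>M borel)"
    by (intro sets_pair_measure_cong) (auto simp: \<nu>(2) Unif_def)
  have right: "emeasure Unif {c<..} = ennreal (1 - c)"
  proof -
    have "{0..1} \<inter> {c<..} = {c<..1::real}" using c by auto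
    then show ?thesis using c by (simp add: Unif_def divide_ennreal_def)
  qed
  have left: "emeasure Unif {..c'} \<le> ennreal c'"
  proof -
    have "emeasure Unif {..c'} = emeasure lborel ({0..1} \<inter> {..c'})"
      by (simp add: Unif_def divide_ennreal_def)
    also have "\<dots> \<le> emeasure lborel {0..c'}" by (rule emeasure_mono) auto
    finally show ?thesis using c by simp
  qed
  have "(\<integral>\<^sup>+gu. lip_window p c c' gu \<partial>(\<nu> \<Otimes>\<^sub>M Unif)) = (\<integral>\<^sup>+g. \<integral>\<^sup>+u. lip_window p c c' (g, u) \<partial>Unif \<partial>\<nu>)"
    by (rule Unif.nn_integral_fst[symmetric]) simp
  also have "\<dots> = (\<integral>\<^sup>+g. emeasure Unif {c<..} + ennreal (Lip g powr p) * emeasure Unif {..c'} \<partial>\<nu>)"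
  proof (intro nn_integral_cong)
    have sets: "{c<..} \<in> sets Unif" "{..c'} \<in> sets Unif" by (simp_all add: Unif_def)
    show "(\<integral>\<^sup>+u. lip_window p c c' (g, u) \<partial>Unif)
        = emeasure Unif {c<..} + ennreal (Lip g powr p) * emeasure Unif {..c'}" for g
      unfolding lip_window_def using sets
      by (subst nn_integral_add) (auto simp: nn_integral_cmult_indicator)
  qed
  also have "\<dots> \<le> (\<integral>\<^sup>+g. ennreal (1 - c) + ennreal (Lip g powr p) * ennreal c' \<partial>\<nu>)"
    using right left by (intro nn_integral_mono add_mono mult_left_mono) auto
  also have "\<dots> = ennreal (1 - c) + (\<integral>\<^sup>+g. ennreal (Lip g powr p) \<partial>\<nu>) * ennreal c'"
  proof -
    have "(\<lambda>g. Lip g powr p) \<in> borel_measurable LipM" by measurable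
    then have "(\<lambda>g. Lip g powr p) \<in> borel_measurable \<nu>"
      by (simp only: measurable_cong_sets[OF \<nu>(2) refl])
    then show ?thesis by (simp add: nn_integral_add nn_integral_multc \<nu>.emeasure_space_1)
  qed
  finally show ?thesis by (simp add: Unif_def)
qed

lemma finite_grid_cover:
  fixes a b \<delta> :: real
  assumes "0 < \<delta>"
  obtains C where "finite C" "C \<subseteq> {a..b}" "\<And>x. x \<in> {a..b} \<Longrightarrow> \<exists>c\<in>C. c \<le> x \<and> x \<le> c + \<delta>"
proof
  let ?C = "(\<lambda>j. a + real j * \<delta>) ` {j. a + real j * \<delta> \<le> b}"
  have "j \<le> nat \<lceil>(b - a) / \<delta>\<rceil>" if "a + real j * \<delta> \<le> b" for j
  proof -
    have "real j \<le> (b - a) / \<delta>" using that assms by (simp add: pos_le_divide_eq algebra_simps)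
    then show ?thesis by linarith
  qed
  then have "{j. a + real j * \<delta> \<le> b} \<subseteq> {..nat \<lceil>(b - a) / \<delta>\<rceil>}" by auto
  then show "finite ?C" using finite_subset by blast
  show "?C \<subseteq> {a..b}" using assms by auto
  fix x assume x: "x \<in> {a..b}"
  define j where "j = nat \<lfloor>(x - a) / \<delta>\<rfloor>"
  have "0 \<le> (x - a) / \<delta>" using x assms by simp
  then have "real j \<le> (x - a) / \<delta>" "(x - a) / \<delta> < real j + 1"
    unfolding j_def by linarith+
  then have "a + real j * \<delta> \<le> x" "x \<le> a + real j * \<delta> + \<delta>"
    using assms by (simp_all add: pos_le_divide_eq pos_divide_less_eq algebra_simps)
  then show "\<exists>c\<in>?C. c \<le> x \<and> x \<le> c + \<delta>" using x by force
qed

section \<open>Expectations\<close>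

lemma outer_nn_integral_le_AE:
  assumes h: "h \<in> borel_measurable M" and le: "AE \<omega> in M. g \<omega> \<le> h \<omega>"
  shows "outer_nn_integral M g \<le> integral\<^sup>N M h"
proof -
  obtain N where N: "{\<omega> \<in> space M. \<not> g \<omega> \<le> h \<omega>} \<subseteq> N" "emeasure M N = 0" "N \<in> sets M"
    using le by (rule AE_E)
  define h' where "h' \<omega> = h \<omega> + \<infinity> * indicator N \<omega>" for \<omega>
  have h': "h' \<in> borel_measurable M" unfolding h'_def using h N(3) by measurable
  have "\<forall>\<omega>\<in>space M. g \<omega> \<le> h' \<omega>"
    using N(1) by (auto simp: h'_def indicator_def)
  then have "outer_nn_integral M g \<le> integral\<^sup>N M h'"
    unfolding outer_nn_integral_def using h' by (intro INF_lower) auto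
  also have "integral\<^sup>N M h' = integral\<^sup>N M h"
    unfolding h'_def using h N(2,3) by (subst nn_integral_add) (auto simp: nn_integral_cmult_indicator)
  finally show ?thesis .
qed

lemma nn_integral_suminf_shift_le_geometric:
  fixes B :: "nat \<Rightarrow> 'a \<Rightarrow> ennreal"
  assumes B: "\<And>k. B k \<in> borel_measurable M" "\<And>k. (\<integral>\<^sup>+\<omega>. B k \<omega> \<partial>M) \<le> ennreal (K * r ^ k)"
    and K: "0 \<le> K" and r: "0 \<le> r" "r < 1"
  shows "(\<integral>\<^sup>+\<omega>. (\<Sum>k. B (k + n) \<omega>) \<partial>M) \<le> ennreal (K / (1 - r) * r ^ n)"
proof -
  have sums: "(\<lambda>k. K * r ^ (k + n)) sums (K / (1 - r) * r ^ n)"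
    using sums_mult[OF geometric_sums[of r], of "K * r ^ n"] r
    by (simp add: power_add mult_ac)
  have "(\<integral>\<^sup>+\<omega>. (\<Sum>k. B (k + n) \<omega>) \<partial>M) = (\<Sum>k. \<integral>\<^sup>+\<omega>. B (k + n) \<omega> \<partial>M)"
    using B(1) by (rule nn_integral_suminf)
  also have "\<dots> \<le> (\<Sum>k. ennreal (K * r ^ (k + n)))"
    using B(2) by (intro suminf_le) auto
  also have "\<dots> = ennreal (K / (1 - r) * r ^ n)"
    using sums K r by (simp add: suminf_ennreal2 sums_iff)
  finally show ?thesis .
qed

lemma (in prob_space) nn_integral_iid_prod:
  assumes indep: "indep_vars (\<lambda>_. N) X UNIV" and distr: "\<And>i. distr M N (X i) = D"
    and \<psi>: "\<psi> \<in> borel_measurable N" and \<theta>: "\<theta> \<in> borel_measurable N"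
  shows "(\<integral>\<^sup>+\<omega>. (\<Prod>i<k. \<psi> (X i \<omega>)) * \<theta> (X k \<omega>) \<partial>M)
           = (\<integral>\<^sup>+z. \<psi> z \<partial>D) ^ k * (\<integral>\<^sup>+z. \<theta> z \<partial>D)"
proof -
  define Y where "Y i = (if i < k then \<psi> else \<theta>)" for i
  have X: "X i \<in> M \<rightarrow>\<^sub>M N" for i
    using indep by (auto simp: indep_vars_def)
  have Y: "Y i \<in> borel_measurable N" for i
    using \<psi> \<theta> by (simp add: Y_def)
  have law: "(\<integral>\<^sup>+\<omega>. f (X i \<omega>) \<partial>M) = (\<integral>\<^sup>+z. f z \<partial>D)" if "f \<in> borel_measurable N" for f i
  proof -
    have "integral\<^sup>N (distr M N (X i)) f = (\<integral>\<^sup>+\<omega>. f (X i \<omega>) \<partial>M)"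
      using X that by (intro nn_integral_distr) auto
    then show ?thesis by (simp add: distr)
  qed
  have "(\<integral>\<^sup>+\<omega>. (\<Prod>i<k. \<psi> (X i \<omega>)) * \<theta> (X k \<omega>) \<partial>M) = (\<integral>\<^sup>+\<omega>. (\<Prod>i\<in>{..k}. Y i (X i \<omega>)) \<partial>M)"
    by (simp add: Y_def lessThan_Suc_atMost[symmetric])
  also have "\<dots> = (\<Prod>i\<in>{..k}. \<integral>\<^sup>+\<omega>. Y i (X i \<omega>) \<partial>M)"
    using Y by (intro indep_vars_nn_integral indep_vars_compose2[OF indep_vars_subset[OF indep]]) auto
  also have "\<dots> = (\<integral>\<^sup>+z. \<psi> z \<partial>D) ^ k * (\<integral>\<^sup>+z. \<theta> z \<partial>D)"
    using law[OF \<psi>] law[OF \<theta>] by (simp add: Y_def lessThan_Suc_atMost[symmetric])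
  finally show ?thesis .
qed

locale iid_lipschitz_iteration = prob_space M
  for M :: "'a measure" +
  fixes \<nu> :: "(real \<Rightarrow> real) measure" and F :: "nat \<Rightarrow> 'a \<Rightarrow> real \<Rightarrow> real"
    and U :: "nat \<Rightarrow> 'a \<Rightarrow> real" and z0 p :: real
  assumes prob_space_nu: "prob_space \<nu>" and sets_nu: "sets \<nu> = sets LipM"
    and indep: "indep_vars (\<lambda>_. LipM \<Otimes>\<^sub>M borel) (\<lambda>i \<omega>. (F i \<omega>, U i \<omega>)) UNIV"
    and distr: "\<And>i. distr M (LipM \<Otimes>\<^sub>M borel) (\<lambda>\<omega>. (F i \<omega>, U i \<omega>))
                   = \<nu> \<Otimes>\<^sub>M uniform_measure lborel {0..1::real}"
    and p: "0 < p" "p \<le> 1"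
    and moment_less_1: "(\<integral>\<^sup>+g. ennreal (Lip g powr p) \<partial>\<nu>) < 1"
    and displacement_finite: "(\<integral>\<^sup>+g. ennreal \<bar>g z0 - z0\<bar> \<partial>\<nu>) < \<infinity>"
begin

lemma measurable_F_U [measurable]: "(\<lambda>\<omega>. (F i \<omega>, U i \<omega>)) \<in> M \<rightarrow>\<^sub>M LipM \<Otimes>\<^sub>M borel"
  using indep by (auto simp: indep_vars_def)

lemma measurable_F [measurable]: "F i \<in> M \<rightarrow>\<^sub>M LipM"
  using measurable_compose[OF measurable_F_U measurable_fst] by simp

lemma measurable_U [measurable]: "U i \<in> borel_measurable M"
  using measurable_compose[OF measurable_F_U measurable_snd] by simp

lemma F_in_LipG: "\<omega> \<in> space M \<Longrightarrow> F i \<omega> \<in> LipG"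
  using measurable_space[OF measurable_F] by (simp add: space_LipM)

definition Phi :: real where
  "Phi = enn2real (\<integral>\<^sup>+g. ennreal (Lip g powr p) \<partial>\<nu>)"

lemma nn_integral_Lip_powr_eq_Phi: "(\<integral>\<^sup>+g. ennreal (Lip g powr p) \<partial>\<nu>) = ennreal Phi"
  using moment_less_1 unfolding Phi_def
  by (intro ennreal_enn2real[symmetric]) (auto simp: less_top[symmetric] dest: order.strict_trans)

lemma Phi_nonneg: "0 \<le> Phi"
  by (simp add: Phi_def)

lemma Phi_less_1: "Phi < 1"
  using moment_less_1 by (simp add: nn_integral_Lip_powr_eq_Phi)

definition displacement_moment :: real where
  "displacement_moment = 1 + enn2real (\<integral>\<^sup>+g. ennreal \<bar>g z0 - z0\<bar> \<partial>\<nu>)"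

lemma nn_integral_displacement:
  "(\<integral>\<^sup>+gu. 1 + ennreal \<bar>fst gu z0 - z0\<bar> \<partial>(\<nu> \<Otimes>\<^sub>M uniform_measure lborel {0..1::real}))
     = ennreal displacement_moment"
proof -
  interpret Unif: prob_space "uniform_measure lborel {0..1::real}"
    by (rule prob_space_uniform_measure) auto
  interpret \<nu>: prob_space \<nu> by (rule prob_space_nu)
  have [measurable_cong]: "sets (\<nu> \<Otimes>\<^sub>M uniform_measure lborel {0..1::real}) = sets (LipM \<Otimes>\<^sub>M borel)"
    by (intro sets_pair_measure_cong) (auto simp: sets_nu)
  have "(\<lambda>g. g z0) \<in> borel_measurable \<nu>"
    by (simp only: measurable_cong_sets[OF sets_nu refl] borel_measurable_LipM_eval)
  then have "(\<integral>\<^sup>+g. 1 + ennreal \<bar>g z0 - z0\<bar> \<partial>\<nu>) = 1 + (\<integral>\<^sup>+g. ennreal \<bar>g z0 - z0\<bar> \<partial>\<nu>)"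
    by (simp add: nn_integral_add \<nu>.emeasure_space_1)
  moreover have "(\<integral>\<^sup>+gu. 1 + ennreal \<bar>fst gu z0 - z0\<bar> \<partial>(\<nu> \<Otimes>\<^sub>M uniform_measure lborel {0..1::real}))
      = (\<integral>\<^sup>+g. 1 + ennreal \<bar>g z0 - z0\<bar> \<partial>\<nu>)"
  proof -
    have "(\<integral>\<^sup>+gu. 1 + ennreal \<bar>fst gu z0 - z0\<bar> \<partial>(\<nu> \<Otimes>\<^sub>M uniform_measure lborel {0..1::real}))
        = (\<integral>\<^sup>+g. \<integral>\<^sup>+u. 1 + ennreal \<bar>fst (g, u) z0 - z0\<bar> \<partial>uniform_measure lborel {0..1::real} \<partial>\<nu>)"
      by (rule Unif.nn_integral_fst[symmetric]) simp
    then show ?thesis by (simp add: Unif.emeasure_space_1)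
  qed
  ultimately show ?thesis
    using displacement_finite
    by (simp add: displacement_moment_def ennreal_plus ennreal_enn2real_if less_top)
qed

lemma nn_integral_lip_window_le_rate:
  assumes "0 < a" "a \<le> c" "c \<le> 1" "0 \<le> \<delta>"
  shows "(\<integral>\<^sup>+gu. lip_window p c (c + \<delta>) gu \<partial>(\<nu> \<Otimes>\<^sub>M uniform_measure lborel {0..1::real}))
           \<le> ennreal (1 - a * (1 - Phi) + Phi * \<delta>)"
proof -
  have "a * (1 - Phi) \<le> c * (1 - Phi)"
    using assms Phi_less_1 by (intro mult_right_mono) auto
  then have "(1 - c) + Phi * (c + \<delta>) \<le> 1 - a * (1 - Phi) + Phi * \<delta>"
    by (simp add: algebra_simps)
  moreover have "ennreal (1 - c) + ennreal Phi * ennreal (c + \<delta>) = ennreal ((1 - c) + Phi * (c + \<delta>))"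
    using assms Phi_nonneg by (simp add: ennreal_mult ennreal_plus)
  ultimately have "ennreal (1 - c) + ennreal Phi * ennreal (c + \<delta>)
      \<le> ennreal (1 - a * (1 - Phi) + Phi * \<delta>)"
    by (simp add: ennreal_leI)
  moreover have "(\<integral>\<^sup>+gu. lip_window p c (c + \<delta>) gu \<partial>(\<nu> \<Otimes>\<^sub>M uniform_measure lborel {0..1::real}))
      \<le> ennreal (1 - c) + ennreal Phi * ennreal (c + \<delta>)"
    using nn_integral_lip_window_le[OF prob_space_nu sets_nu, of c "c + \<delta>" p] assms
    by (simp add: nn_integral_Lip_powr_eq_Phi)
  ultimately show ?thesis by (rule order_trans[rotated])
qed

text \<open>The B_k of the proof sketch, for a finite set C of window left ends.\<close>
definition window_sum :: "real set \<Rightarrow> real \<Rightarrow> nat \<Rightarrow> 'a \<Rightarrow> ennreal" where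
  "window_sum C \<delta> k \<omega> = (\<Sum>c\<in>C. (\<Prod>i<k. lip_window p c (c + \<delta>) (F i \<omega>, U i \<omega>))
                                  * (1 + ennreal \<bar>F k \<omega> z0 - z0\<bar>))"

lemma borel_measurable_window_sum [measurable]: "window_sum C \<delta> k \<in> borel_measurable M"
proof -
  have "(\<lambda>\<omega>. lip_window p c (c + \<delta>) (F i \<omega>, U i \<omega>)) \<in> borel_measurable M" for c i
    by measurable
  moreover have "(\<lambda>\<omega>. F k \<omega> z0) \<in> borel_measurable M"
    using measurable_compose[OF measurable_F borel_measurable_LipM_eval] by simp
  ultimately show ?thesis
    unfolding window_sum_def by measurable
qed

lemma nn_integral_window_sum_le:
  assumes C: "finite C" "C \<subseteq> {a..1}" and a: "0 < a" "a \<le> 1" and \<delta>: "0 \<le> \<delta>"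
  shows "(\<integral>\<^sup>+\<omega>. window_sum C \<delta> k \<omega> \<partial>M)
           \<le> ennreal (card C * displacement_moment * (1 - a * (1 - Phi) + Phi * \<delta>) ^ k)"
proof -
  define r where "r = 1 - a * (1 - Phi) + Phi * \<delta>"
  have "a * (1 - Phi) \<le> 1"
    using a Phi_nonneg Phi_less_1 by (intro mult_le_one) auto
  then have r0: "0 \<le> r"
    using \<delta> Phi_nonneg by (simp add: r_def)
  have dm0: "0 \<le> displacement_moment" by (simp add: displacement_moment_def)
  have summand: "(\<integral>\<^sup>+\<omega>. (\<Prod>i<k. lip_window p c (c + \<delta>) (F i \<omega>, U i \<omega>)) * (1 + ennreal \<bar>F k \<omega> z0 - z0\<bar>) \<partial>M)
      \<le> ennreal (displacement_moment * r ^ k)" if "c \<in> C" for c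
  proof -
    have "(\<integral>\<^sup>+\<omega>. (\<Prod>i<k. lip_window p c (c + \<delta>) (F i \<omega>, U i \<omega>)) * (1 + ennreal \<bar>F k \<omega> z0 - z0\<bar>) \<partial>M)
        = (\<integral>\<^sup>+gu. lip_window p c (c + \<delta>) gu \<partial>(\<nu> \<Otimes>\<^sub>M uniform_measure lborel {0..1::real})) ^ k
          * ennreal displacement_moment"
      using nn_integral_iid_prod[OF indep distr, of "lip_window p c (c + \<delta>)"
          "\<lambda>gu. 1 + ennreal \<bar>fst gu z0 - z0\<bar>" k]
      by (simp add: nn_integral_displacement)
    also have "\<dots> \<le> ennreal r ^ k * ennreal displacement_moment"
      using that C a \<delta> nn_integral_lip_window_le_rate[of a c \<delta>]
      by (intro mult_right_mono power_mono) (auto simp: r_def)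
    also have "\<dots> = ennreal (displacement_moment * r ^ k)"
      using r0 dm0 by (simp add: ennreal_mult ennreal_power mult.commute)
    finally show ?thesis .
  qed
  have "(\<integral>\<^sup>+\<omega>. window_sum C \<delta> k \<omega> \<partial>M)
      = (\<Sum>c\<in>C. \<integral>\<^sup>+\<omega>. (\<Prod>i<k. lip_window p c (c + \<delta>) (F i \<omega>, U i \<omega>)) * (1 + ennreal \<bar>F k \<omega> z0 - z0\<bar>) \<partial>M)"
    unfolding window_sum_def
    by (rule nn_integral_sum) (use borel_measurable_window_sum[of "{c}" \<delta> k for c] in
        \<open>simp add: window_sum_def\<close>)
  also have "\<dots> \<le> (\<Sum>c\<in>C. ennreal (displacement_moment * r ^ k))"
    using summand by (rule sum_mono)
  also have "\<dots> = ennreal (card C * displacement_moment * r ^ k)"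
    using r0 dm0 by (simp add: ennreal_of_nat_eq_real_of_nat ennreal_mult[symmetric] mult.assoc)
  finally show ?thesis by (simp add: r_def)
qed

lemma zeta_n_Suc_diff_powr_le_window_sum:
  assumes "\<omega> \<in> space M" "x \<in> {a..1}" "finite C"
    and cover: "\<And>x. x \<in> {a..1} \<Longrightarrow> \<exists>c\<in>C. c \<le> x \<and> x \<le> c + \<delta>"
  shows "ennreal (\<bar>zeta_n F U z0 (Suc k) x \<omega> - zeta_n F U z0 k x \<omega>\<bar> powr p) \<le> window_sum C \<delta> k \<omega>"
proof -
  obtain c where c: "c \<in> C" "c \<le> x" "x \<le> c + \<delta>" using cover[OF assms(2)] by blast
  have "ennreal (\<bar>zeta_n F U z0 (Suc k) x \<omega> - zeta_n F U z0 k x \<omega>\<bar> powr p)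
      \<le> (\<Prod>i<k. lip_window p c (c + \<delta>) (F i \<omega>, U i \<omega>)) * (1 + ennreal \<bar>F k \<omega> z0 - z0\<bar>)"
    using F_in_LipG[OF assms(1)] p c by (intro zeta_n_Suc_diff_powr_le_lip_window) auto
  also have "\<dots> \<le> window_sum C \<delta> k \<omega>"
    unfolding window_sum_def by (rule member_le_sum[OF c(1) _ assms(3)]) simp
  finally show ?thesis .
qed

lemma sup_zeta_diff_powr_le_window_sum_tail:
  assumes "\<omega> \<in> space M" "finite C" "(\<Sum>k. window_sum C \<delta> k \<omega>) \<noteq> \<infinity>"
    and cover: "\<And>x. x \<in> {a..1} \<Longrightarrow> \<exists>c\<in>C. c \<le> x \<and> x \<le> c + \<delta>"
  shows "(SUP x\<in>{a..1}. ennreal (\<bar>zeta F U z0 x \<omega> - zeta_n F U z0 n x \<omega>\<bar> powr p))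
           \<le> (\<Sum>k. window_sum C \<delta> (k + n) \<omega>)"
proof (rule SUP_least)
  fix x assume "x \<in> {a..1}"
  then show "ennreal (\<bar>zeta F U z0 x \<omega> - zeta_n F U z0 n x \<omega>\<bar> powr p) \<le> (\<Sum>k. window_sum C \<delta> (k + n) \<omega>)"
    unfolding zeta_def using assms p
    by (intro ennreal_abs_lim_diff_powr_le_suminf zeta_n_Suc_diff_powr_le_window_sum) auto
qed

lemma outer_nn_integral_sup_tendsto_0:
  assumes a: "0 < a" "a \<le> 1"
  shows "(\<lambda>n. outer_nn_integral M
           (\<lambda>\<omega>. SUP x\<in>{a..1}. ennreal (\<bar>zeta F U z0 x \<omega> - zeta_n F U z0 n x \<omega>\<bar> powr p)))
         \<longlonglongrightarrow> 0"
proof -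
  \<comment> \<open>\<delta> is chosen so that Phi \<delta> < a (1 - Phi), i.e. r < 1.\<close>
  define \<delta> where "\<delta> = a * (1 - Phi) / 2"
  define r where "r = 1 - a * (1 - Phi) + Phi * \<delta>"
  have \<delta>: "0 < \<delta>" using a Phi_less_1 by (simp add: \<delta>_def)
  have "a * (1 - Phi) \<le> 1" "Phi * \<delta> \<le> \<delta>"
    using a Phi_nonneg Phi_less_1 \<delta> by (auto intro: mult_le_one mult_left_le_one_le)
  then have r: "0 \<le> r" "r < 1"
    using \<delta> Phi_nonneg by (auto simp: r_def \<delta>_def)
  obtain C where C: "finite C" "C \<subseteq> {a..1}" "\<And>x. x \<in> {a..1} \<Longrightarrow> \<exists>c\<in>C. c \<le> x \<and> x \<le> c + \<delta>"
    using finite_grid_cover[OF \<delta>] by blast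
  define K where "K = card C * displacement_moment"
  have K: "0 \<le> K" by (simp add: K_def displacement_moment_def)
  have tail: "(\<integral>\<^sup>+\<omega>. (\<Sum>k. window_sum C \<delta> (k + n) \<omega>) \<partial>M) \<le> ennreal (K / (1 - r) * r ^ n)" for n
    using nn_integral_window_sum_le[OF C(1,2) a, of \<delta>] \<delta> K r
    by (intro nn_integral_suminf_shift_le_geometric) (auto simp: K_def r_def)
  have "AE \<omega> in M. (\<Sum>k. window_sum C \<delta> k \<omega>) \<noteq> \<infinity>"
    using tail[of 0] by (intro nn_integral_PInf_AE) (auto simp: top_unique)
  then have "AE \<omega> in M. (SUP x\<in>{a..1}. ennreal (\<bar>zeta F U z0 x \<omega> - zeta_n F U z0 n x \<omega>\<bar> powr p))
      \<le> (\<Sum>k. window_sum C \<delta> (k + n) \<omega>)" for n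
    using AE_space
    by eventually_elim (use C in \<open>auto intro: sup_zeta_diff_powr_le_window_sum_tail\<close>)
  then have bound: "outer_nn_integral M
      (\<lambda>\<omega>. SUP x\<in>{a..1}. ennreal (\<bar>zeta F U z0 x \<omega> - zeta_n F U z0 n x \<omega>\<bar> powr p))
        \<le> ennreal (K / (1 - r) * r ^ n)" for n
    by (intro order_trans[OF outer_nn_integral_le_AE tail]) simp_all
  have "(\<lambda>n. ennreal (K / (1 - r) * r ^ n)) \<longlonglongrightarrow> ennreal (K / (1 - r) * 0)"
    using r by (intro tendsto_ennrealI tendsto_mult_left LIMSEQ_power_zero) auto
  then have geometric: "(\<lambda>n. ennreal (K / (1 - r) * r ^ n)) \<longlonglongrightarrow> 0"
    by simp
  show ?thesis
    by (rule tendsto_sandwich[OF always_eventually always_eventually tendsto_const geometric])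
       (simp, blast intro: bound)
qed

end

theorem proposition4p6:
  fixes M :: "'a measure" and \<nu> :: "(real \<Rightarrow> real) measure"
    and F :: "nat \<Rightarrow> 'a \<Rightarrow> real \<Rightarrow> real" and U :: "nat \<Rightarrow> 'a \<Rightarrow> real"
    and z0 a p :: real
  assumes nu_prob: "prob_space \<nu>" and nu_sets: "sets \<nu> = sets LipM"
    and EL: "(\<integral>\<^sup>+ g. ennreal (Lip g) \<partial>\<nu>) < \<infinity>"
    and Elog: "(\<integral>\<^sup>+ g. pos_log_part (Lip g) \<partial>\<nu>) < (\<integral>\<^sup>+ g. neg_log_part (Lip g) \<partial>\<nu>)"
    and Ez0: "(\<integral>\<^sup>+ g. ennreal \<bar>g z0 - z0\<bar> \<partial>\<nu>) < \<infinity>"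
    and M_prob: "prob_space M"
    and indep: "prob_space.indep_vars M (\<lambda>_. LipM \<Otimes>\<^sub>M borel) (\<lambda>i \<omega>. (F i \<omega>, U i \<omega>)) UNIV"
    and distr: "\<And>i. distr M (LipM \<Otimes>\<^sub>M borel) (\<lambda>\<omega>. (F i \<omega>, U i \<omega>))
                     = \<nu> \<Otimes>\<^sub>M uniform_measure lborel {0..1::real}"
    and a: "0 < a" "a \<le> 1"
    and p: "0 < p" "p \<le> 1" "(\<integral>\<^sup>+ g. ennreal (Lip g powr p) \<partial>\<nu>) < 1"
  shows "(\<lambda>n. outer_nn_integral M
            (\<lambda>\<omega>. SUP x \<in> {a..1}. ennreal (\<bar>zeta F U z0 x \<omega> - zeta_n F U z0 n x \<omega>\<bar> powr p)))
         \<longlonglongrightarrow> 0"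
proof -
  interpret iid_lipschitz_iteration M \<nu> F U z0 p
    by (intro iid_lipschitz_iteration.intro iid_lipschitz_iteration_axioms.intro
        M_prob nu_prob nu_sets indep distr p Ez0)
  show ?thesis
    by (rule outer_nn_integral_sup_tendsto_0[OF a])
qed

end
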